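(* Let $R$ be a Noetherian local ring which is not an integral domain. If $\gamma(\mathbb{AG}(R))<\infty$, then either $R$ is Gorenstein, or $R$ is an Artinian ring with only finitely many ideals.
   Context: All rings are commutative with $1\neq 0$. An ideal $I$ of $R$ is an annihilating-ideal if $IJ=(0)$ for some nonzero ideal $J$ of $R$. The annihilating-ideal graph $\mathbb{AG}(R)$ is the simple graph whose vertices are the nonzero annihilating-ideals of $R$, with distinct vertices $I,J$ adjacent iff $IJ=(0)$. The genus $\gamma(G)$ of a finite graph is the least $n$ such that $G$ embeds in the orientable surface of genus $n$; for an infinite graph, $\gamma(G)$ is the supremum of the genera of its finite subgraphs. A Noetherian local ring $(R,\mathfrak{m})$ is called Gorenstein if $\dim_{R/\mathfrak{m}}\operatorname{Ann}(\mathfrak{m})=1$. *)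

theory Defs
  imports Main "HOL-Library.Extended_Nat"
begin

definition is_ideal :: "'a::comm_ring_1 set \<Rightarrow> bool" where
  "is_ideal I \<longleftrightarrow> 0 \<in> I \<and> (\<forall>x\<in>I. \<forall>y\<in>I. x + y \<in> I) \<and> (\<forall>r. \<forall>x\<in>I. r * x \<in> I)"

definition ideal_prod :: "'a::comm_ring_1 set \<Rightarrow> 'a set \<Rightarrow> 'a set" where
  "ideal_prod I J = \<Inter>{K. is_ideal K \<and> (\<forall>x\<in>I. \<forall>y\<in>J. x * y \<in> K)}"

definition annihilating_ideal :: "'a::comm_ring_1 set \<Rightarrow> bool" where
  "annihilating_ideal I \<longleftrightarrow> is_ideal I \<and> (\<exists>J. is_ideal J \<and> J \<noteq> {0} \<and> ideal_prod I J = {0})"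

definition annihilator :: "'a::comm_ring_1 set \<Rightarrow> 'a set" where
  "annihilator S = {x. \<forall>s\<in>S. x * s = 0}"

definition maximal_ideal :: "'a::comm_ring_1 set \<Rightarrow> bool" where
  "maximal_ideal m \<longleftrightarrow> is_ideal m \<and> m \<noteq> UNIV \<and>
     (\<forall>J. is_ideal J \<and> m \<subseteq> J \<longrightarrow> J = m \<or> J = UNIV)"

definition local_ring :: "'a::comm_ring_1 itself \<Rightarrow> bool" where
  "local_ring _ \<longleftrightarrow> (\<exists>!m::'a set. maximal_ideal m)"

definition the_max_ideal :: "'a::comm_ring_1 set" where
  "the_max_ideal = (THE m. maximal_ideal m)"

definition noetherian_ring :: "'a::comm_ring_1 itself \<Rightarrow> bool" where
  "noetherian_ring _ \<longleftrightarrow> (\<forall>f :: nat \<Rightarrow> 'a set. (\<forall>n. is_ideal (f n) \<and> f n \<subseteq> f (Suc n))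
      \<longrightarrow> (\<exists>N. \<forall>n\<ge>N. f n = f N))"

definition artinian_ring :: "'a::comm_ring_1 itself \<Rightarrow> bool" where
  "artinian_ring _ \<longleftrightarrow> (\<forall>f :: nat \<Rightarrow> 'a set. (\<forall>n. is_ideal (f n) \<and> f (Suc n) \<subseteq> f n)
      \<longrightarrow> (\<exists>N. \<forall>n\<ge>N. f n = f N))"

definition integral_domain :: "'a::comm_ring_1 itself \<Rightarrow> bool" where
  "integral_domain _ \<longleftrightarrow> (1::'a) \<noteq> 0 \<and> (\<forall>x y :: 'a. x * y = 0 \<longrightarrow> x = 0 \<or> y = 0)"

text \<open>Gorenstein (Noetherian local, dim over R/m of Ann(m) equal to 1).  The R/m-vector
  space Ann(m) has dimension 1 iff it is spanned by a single nonzero vector x; the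
  R/m-span of x equals its R-multiples.\<close>
definition gorenstein :: "'a::comm_ring_1 itself \<Rightarrow> bool" where
  "gorenstein T \<longleftrightarrow> noetherian_ring T \<and> local_ring T \<and>
     (\<exists>x::'a. x \<noteq> 0 \<and> annihilator (the_max_ideal :: 'a set) = {r * x | r. True})"

definition AG_vertices :: "'a::comm_ring_1 itself \<Rightarrow> 'a set set" where
  "AG_vertices _ = {I. annihilating_ideal I \<and> I \<noteq> {0}}"

definition AG_edge :: "'a::comm_ring_1 set \<Rightarrow> 'a set \<Rightarrow> bool" where
  "AG_edge I J \<longleftrightarrow> I \<noteq> J \<and> ideal_prod I J = {0}"

text \<open>A graph is a vertex set V with an edge relation E (symmetric, irreflexive).
  Darts are ordered pairs (u,w) with u w adjacent.\<close>
definition darts :: "'v set \<Rightarrow> ('v \<Rightarrow> 'v \<Rightarrow> bool) \<Rightarrow> ('v \<times> 'v) set" where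
  "darts V E = {(u, w). u \<in> V \<and> w \<in> V \<and> E u w}"

definition rotation_system :: "'v set \<Rightarrow> ('v \<Rightarrow> 'v \<Rightarrow> bool) \<Rightarrow> ('v \<times> 'v \<Rightarrow> 'v \<times> 'v) \<Rightarrow> bool" where
  "rotation_system V E \<sigma> \<longleftrightarrow> bij_betw \<sigma> (darts V E) (darts V E) \<and>
     (\<forall>d\<in>darts V E. {(\<sigma> ^^ n) d | n. True} = {d' \<in> darts V E. fst d' = fst d})"

definition face_perm :: "('v \<times> 'v \<Rightarrow> 'v \<times> 'v) \<Rightarrow> 'v \<times> 'v \<Rightarrow> 'v \<times> 'v" where
  "face_perm \<sigma> d = \<sigma> (snd d, fst d)"

definition faces :: "'v set \<Rightarrow> ('v \<Rightarrow> 'v \<Rightarrow> bool) \<Rightarrow> ('v \<times> 'v \<Rightarrow> 'v \<times> 'v) \<Rightarrow> ('v \<times> 'v) set set" where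
  "faces V E \<sigma> = {{(face_perm \<sigma> ^^ n) d | n. True} | d. d \<in> darts V E}"

definition nonisolated :: "'v set \<Rightarrow> ('v \<Rightarrow> 'v \<Rightarrow> bool) \<Rightarrow> 'v set" where
  "nonisolated V E = {v \<in> V. \<exists>w\<in>V. E v w}"

definition nontrivial_components :: "'v set \<Rightarrow> ('v \<Rightarrow> 'v \<Rightarrow> bool) \<Rightarrow> 'v set set" where
  "nontrivial_components V E =
     {{w. (\<lambda>a b. a \<in> V \<and> b \<in> V \<and> E a b)\<^sup>*\<^sup>* v w} | v. v \<in> nonisolated V E}"

text \<open>Genus of a finite graph: minimum over rotation systems of the total genus given by
  Euler's formula summed over the components (isolated vertices contribute 0):
  2g = 2c - V + E - F.\<close>
definition finite_graph_genus :: "'v set \<Rightarrow> ('v \<Rightarrow> 'v \<Rightarrow> bool) \<Rightarrow> nat" where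
  "finite_graph_genus V E = (LEAST g. \<exists>\<sigma>. rotation_system V E \<sigma> \<and>
      2 * g + card (nonisolated V E) + card (faces V E \<sigma>)
        = 2 * card (nontrivial_components V E) + card (darts V E) div 2)"

definition finite_subgraph :: "'v set \<Rightarrow> ('v \<Rightarrow> 'v \<Rightarrow> bool) \<Rightarrow> 'v set \<Rightarrow> ('v \<Rightarrow> 'v \<Rightarrow> bool) \<Rightarrow> bool" where
  "finite_subgraph W F V E \<longleftrightarrow> finite W \<and> W \<subseteq> V \<and>
     (\<forall>a b. F a b \<longrightarrow> a \<in> W \<and> b \<in> W \<and> E a b) \<and> (\<forall>a b. F a b \<longrightarrow> F b a) \<and> (\<forall>a. \<not> F a a)"

text \<open>Genus of an arbitrary (possibly infinite) graph: supremum of the genera of its finite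
  subgraphs (for finite graphs this agrees with the genus itself).\<close>
definition graph_genus :: "'v set \<Rightarrow> ('v \<Rightarrow> 'v \<Rightarrow> bool) \<Rightarrow> enat" where
  "graph_genus V E = (SUP p \<in> {(W, F). finite_subgraph W F V E}. enat (finite_graph_genus (fst p) (snd p)))"

end

theory Submission
  imports Defs "HOL-Number_Theory.Cong"
begin

text \<open>If \<open>R\<close> is neither Gorenstein nor Artinian with finitely many ideals, then the
  annihilating-ideal graph contains a complete bipartite graph with sides of size 3 and \<open>\<infinity>\<close>.
  If \<open>Ann(m) = 0\<close>, a Nakayama argument shows that every nonzero principal ideal has infinitely
  many nonzero subideals; for zero divisors \<open>a b = 0\<close>, three subideals of \<open>Ra\<close> and the remaining
  subideals of \<open>Rb\<close> form the two sides. Otherwise \<open>Ann(m)\<close> is not principal and contains \<open>s, t\<close>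
  with \<open>Rs\<close>, \<open>Rt\<close>, \<open>R(s + t)\<close> distinct; being killed by \<open>m\<close>, they annihilate each of the
  infinitely many proper ideals. Finally, \<open>K(k, l)\<close> has genus at least \<open>(k - 2)(l - 2)/4\<close>:
  every face of a rotation system of a bipartite graph without leaves has at least four darts,
  and Euler's relation turns this bound on the number of faces into a bound on the genus.\<close>

definition forward_orbit :: "('b \<Rightarrow> 'b) \<Rightarrow> 'b \<Rightarrow> 'b set" where
  "forward_orbit f x = {(f ^^ n) x | n. True}"

lemma funpow_in_forward_orbit: "(f ^^ n) x \<in> forward_orbit f x"
  unfolding forward_orbit_def by blast

lemma forward_orbit_subset:
  assumes "bij_betw f D D" "x \<in> D"
  shows "forward_orbit f x \<subseteq> D"
  using bij_betw_apply[OF bij_betw_funpow[OF assms(1)] assms(2)] unfolding forward_orbit_def by blast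

lemma bij_betw_funpow_periodic:
  assumes "finite D" "bij_betw f D D" "x \<in> D"
  obtains k where "k > 0" "(f ^^ k) x = x"
proof -
  have "\<not> inj (\<lambda>n. (f ^^ n) x)"
    using forward_orbit_subset[OF assms(2,3)] finite_subset[OF _ assms(1)]
    by (metis finite_imageD forward_orbit_def full_SetCompr_eq infinite_UNIV_nat)
  then obtain i j where "i < j" "(f ^^ i) x = (f ^^ i) ((f ^^ (j - i)) x)"
    unfolding inj_def by (metis funpow_add le_add_diff_inverse linorder_neqE_nat o_apply less_imp_le)
  moreover have "inj_on (f ^^ i) D" "(f ^^ (j - i)) x \<in> D"
    using bij_betw_funpow[OF assms(2)] assms(3) by (auto simp: bij_betw_def)
  ultimately show thesis
    using that[of "j - i"] assms(3) by (metis inj_onD zero_less_diff)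
qed

lemma forward_orbit_eq_if_mem:
  assumes "finite D" "bij_betw f D D" "x \<in> D" "y \<in> forward_orbit f x"
  shows "forward_orbit f y = forward_orbit f x"
proof -
  obtain j where y: "y = (f ^^ j) x" using assms(4) unfolding forward_orbit_def by blast
  obtain k where k: "k > 0" "(f ^^ k) x = x" using bij_betw_funpow_periodic[OF assms(1-3)] .
  have "(f ^^ (k - j mod k)) y = (f ^^ ((k - j mod k + j) mod k)) x"
    using y funpow_mod_eq[OF k(2)] by (simp add: funpow_add)
  also have "(k - j mod k + j) mod k = 0"
    using k(1) by (metis add.commute mod_add_left_eq le_add_diff_inverse mod_le_divisor mod_self)
  finally have "x \<in> forward_orbit f y"
    using funpow_in_forward_orbit[where f = f and n = "k - j mod k" and x = y] by simp
  have "forward_orbit f z \<subseteq> forward_orbit f w" if "z \<in> forward_orbit f w" for z w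
    using that unfolding forward_orbit_def by (auto simp: funpow_add[symmetric, THEN fun_cong, simplified])
  then show ?thesis
    using assms(4) \<open>x \<in> forward_orbit f y\<close> by blast
qed

lemma card_forward_orbits_le:
  assumes "finite D" "bij_betw f D D" "\<And>x. x \<in> D \<Longrightarrow> q \<le> card (forward_orbit f x)"
  shows "q * card (forward_orbit f ` D) \<le> card D"
proof -
  have orbits_finite: "finite X" if "X \<in> forward_orbit f ` D" for X
    using that forward_orbit_subset[OF assms(2)] finite_subset[OF _ assms(1)] by blast
  have "pairwise disjnt (forward_orbit f ` D)"
  proof (rule pairwiseI, rule ccontr)
    fix X Y assume "X \<in> forward_orbit f ` D" "Y \<in> forward_orbit f ` D" "X \<noteq> Y" "\<not> disjnt X Y"
    then obtain x y z where "x \<in> D" "y \<in> D" "X = forward_orbit f x" "Y = forward_orbit f y"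
      "z \<in> X" "z \<in> Y"
      unfolding disjnt_def by blast
    then show False
      using forward_orbit_eq_if_mem[OF assms(1,2)] \<open>X \<noteq> Y\<close> by metis
  qed
  moreover have "\<Union> (forward_orbit f ` D) = D"
    using forward_orbit_subset[OF assms(2)] funpow_in_forward_orbit[where n = 0 and f = f] by force
  ultimately have "card D = (\<Sum>X \<in> forward_orbit f ` D. card X)"
    using card_Union_disjoint orbits_finite by metis
  moreover have "(\<Sum>X \<in> forward_orbit f ` D. q) \<le> (\<Sum>X \<in> forward_orbit f ` D. card X)"
    using assms(3) by (intro sum_mono) blast
  ultimately show ?thesis by (simp add: mult.commute)
qed

section \<open>Cyclic shifts with coprime periods\<close>

lemma funpow_cyclic_step:
  assumes step: "\<And>i. i < m \<Longrightarrow> c (\<alpha> i) = \<alpha> (Suc i mod m)" and "i < m"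
  shows "(c ^^ k) (\<alpha> i) = \<alpha> ((i + k) mod m)"
proof (induction k)
  case 0
  show ?case using \<open>i < m\<close> by simp
next
  case (Suc k)
  have "(i + k) mod m < m"
    using \<open>i < m\<close> by simp
  then show ?case
    using Suc step by (simp add: mod_Suc_eq)
qed

lemma bij_betw_cyclic_step:
  assumes \<alpha>: "bij_betw \<alpha> {..<m} A" and step: "\<And>i. i < m \<Longrightarrow> c (\<alpha> i) = \<alpha> (Suc i mod m)"
  shows "bij_betw c A A"
proof -
  have A: "A = \<alpha> ` {..<m}"
    using \<alpha> by (simp add: bij_betw_def)
  have "c ` A \<subseteq> A"
    unfolding A using step by (auto intro: imageI)
  moreover have "A \<subseteq> c ` A"
  proof
    fix a assume "a \<in> A"
    then obtain i where i: "i < m" "a = \<alpha> i"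
      unfolding A by blast
    then have "Suc ((i + m - 1) mod m) mod m = i"
      by (simp add: mod_Suc_eq)
    then have "a = c (\<alpha> ((i + m - 1) mod m))"
      using i step[of "(i + m - 1) mod m"] by simp
    then show "a \<in> c ` A"
      unfolding A using i(1) by simp
  qed
  ultimately show ?thesis
    using eq_card_imp_inj_on bij_betw_finite[OF \<alpha>] by (metis bij_betw_def subset_antisym finite_lessThan)
qed

lemma mod_add_cong_shift:
  fixes i i' x m :: nat
  assumes "i < m" "i' < m" "[x = i' + m - i] (mod m)"
  shows "(i + x) mod m = i'"
proof -
  have "(i + x) mod m = (i + (i' + m - i)) mod m"
    using assms(3) unfolding cong_def by (metis mod_add_right_eq)
  also have "i + (i' + m - i) = i' + m"
    using assms(1) by simp
  finally show ?thesis
    using assms(2) by simp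
qed

lemma coprime_joint_cyclic_shift:
  assumes "finite A" "finite B" "A \<inter> B = {}" "coprime (card A) (card B)"
  obtains c where "bij_betw c A A" "bij_betw c B B"
    "\<And>a a' b b'. a \<in> A \<Longrightarrow> a' \<in> A \<Longrightarrow> b \<in> B \<Longrightarrow> b' \<in> B \<Longrightarrow>
      \<exists>k. (c ^^ k) a = a' \<and> (c ^^ k) b = b'"
proof -
  define m n where "m = card A" and "n = card B"
  obtain \<alpha> where \<alpha>: "bij_betw \<alpha> {..<m} A"
    using ex_bij_betw_nat_finite[OF assms(1)] unfolding m_def atLeast0LessThan by blast
  obtain \<beta> where \<beta>: "bij_betw \<beta> {..<n} B"
    using ex_bij_betw_nat_finite[OF assms(2)] unfolding n_def atLeast0LessThan by blast
  define c where "c w = (if w \<in> A then \<alpha> (Suc (inv_into {..<m} \<alpha> w) mod m)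
    else \<beta> (Suc (inv_into {..<n} \<beta> w) mod n))" for w
  have step_\<alpha>: "c (\<alpha> i) = \<alpha> (Suc i mod m)" if "i < m" for i
    using that bij_betw_apply[OF \<alpha>] bij_betw_imp_inj_on[OF \<alpha>] unfolding c_def by simp
  have step_\<beta>: "c (\<beta> j) = \<beta> (Suc j mod n)" if "j < n" for j
    using that bij_betw_apply[OF \<beta>] bij_betw_imp_inj_on[OF \<beta>] assms(3) unfolding c_def by auto
  have "\<exists>k. (c ^^ k) a = a' \<and> (c ^^ k) b = b'"
    if ab: "a \<in> A" "a' \<in> A" "b \<in> B" "b' \<in> B" for a a' b b'
  proof -
    obtain i i' j j' where ij: "i < m" "i' < m" "j < n" "j' < n"
      "a = \<alpha> i" "a' = \<alpha> i'" "b = \<beta> j" "b' = \<beta> j'"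
      using ab bij_betw_imp_surj_on[OF \<alpha>] bij_betw_imp_surj_on[OF \<beta>] by blast
    obtain k where "[k = i' + m - i] (mod m)" "[k = j' + n - j] (mod n)"
      using binary_chinese_remainder_nat assms(4) unfolding m_def n_def by blast
    then have "(i + k) mod m = i'" "(j + k) mod n = j'"
      using ij(1-4) mod_add_cong_shift by blast+
    then show ?thesis
      using ij funpow_cyclic_step[where \<alpha> = \<alpha> and m = m, OF step_\<alpha>]
        funpow_cyclic_step[where \<alpha> = \<beta> and m = n, OF step_\<beta>] by metis
  qed
  then show thesis
    using that bij_betw_cyclic_step[OF \<alpha> step_\<alpha>] bij_betw_cyclic_step[OF \<beta> step_\<beta>] by blast
qed

section \<open>Faces of rotation systems\<close>

lemma faces_eq_forward_orbits: "faces V E \<sigma> = forward_orbit (face_perm \<sigma>) ` darts V E"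
  unfolding faces_def forward_orbit_def by blast

lemma rotation_system_bij: "rotation_system V E \<sigma> \<Longrightarrow> bij_betw \<sigma> (darts V E) (darts V E)"
  unfolding rotation_system_def by blast

lemma rotation_system_fst:
  assumes "rotation_system V E \<sigma>" "d \<in> darts V E"
  shows "fst (\<sigma> d) = fst d"
  using assms funpow_in_forward_orbit[where n = 1 and f = \<sigma> and x = d]
  unfolding rotation_system_def forward_orbit_def by force

lemma rotation_system_fixed_dart:
  assumes "rotation_system V E \<sigma>" "d \<in> darts V E" "\<sigma> d = d"
    and "d' \<in> darts V E" "fst d' = fst d"
  shows "d' = d"
proof -
  have "(\<sigma> ^^ n) d = d" for n
    using assms(3) by (induction n) simp_all
  moreover have "d' \<in> {(\<sigma> ^^ n) d | n. True}"
    using assms unfolding rotation_system_def by blast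
  ultimately show ?thesis by auto
qed

lemma bij_betw_swap_darts:
  assumes "\<And>u w. E u w \<Longrightarrow> E w u"
  shows "bij_betw prod.swap (darts V E) (darts V E)"
proof -
  have "prod.swap ` darts V E \<subseteq> darts V E"
    using assms unfolding darts_def by auto
  then have "prod.swap ` darts V E = darts V E"
    using image_mono[OF \<open>prod.swap ` darts V E \<subseteq> darts V E\<close>, of prod.swap] by (simp add: image_comp)
  then show ?thesis
    by (simp add: bij_betw_def)
qed

lemma bij_betw_face_perm:
  assumes "rotation_system V E \<sigma>" "\<And>u w. E u w \<Longrightarrow> E w u"
  shows "bij_betw (face_perm \<sigma>) (darts V E) (darts V E)"
proof -
  have "face_perm \<sigma> = \<sigma> \<circ> prod.swap"
    unfolding face_perm_def by fastforce
  then show ?thesis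
    using bij_betw_trans[OF bij_betw_swap_darts rotation_system_bij] assms by metis
qed

lemma fst_face_perm:
  assumes "rotation_system V E \<sigma>" "\<And>u w. E u w \<Longrightarrow> E w u" "d \<in> darts V E"
  shows "fst (face_perm \<sigma> d) = snd d"
  using rotation_system_fst[OF assms(1) bij_betw_apply[OF bij_betw_swap_darts assms(3)]] assms(2)
  unfolding face_perm_def by (cases d) simp

lemma face_perm_no_2_cycle:
  assumes "rotation_system V E \<sigma>" "\<And>u w. E u w \<Longrightarrow> E w u" "d \<in> darts V E"
    and "\<exists>d'\<in>darts V E. d' \<noteq> d \<and> fst d' = fst d"
  shows "face_perm \<sigma> (face_perm \<sigma> d) \<noteq> d"
proof
  let ?e = "face_perm \<sigma> d"
  assume returns: "face_perm \<sigma> ?e = d"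
  have "?e \<in> darts V E"
    using bij_betw_apply[OF bij_betw_face_perm[OF assms(1,2)] assms(3)] .
  then have "(snd ?e, fst ?e) = d"
    using fst_face_perm[OF assms(1,2)] assms(3) returns by (metis prod.collapse)
  then have "\<sigma> d = d"
    using returns unfolding face_perm_def by simp
  then show False
    using rotation_system_fixed_dart[OF assms(1,3)] assms(4) by blast
qed

text \<open>Consecutive darts of a face start on opposite sides, and a face of two darts would make
  \<open>\<sigma>\<close> fix a dart, i.e. give a vertex of degree one.\<close>

lemma card_face_bipartite_ge_4:
  assumes rs: "rotation_system V E \<sigma>" and sym: "\<And>u w. E u w \<Longrightarrow> E w u"
    and bipartite: "\<And>u w. E u w \<Longrightarrow> u \<in> S \<longleftrightarrow> w \<notin> S"
    and no_leaf: "\<And>d. d \<in> darts V E \<Longrightarrow> \<exists>d'\<in>darts V E. d' \<noteq> d \<and> fst d' = fst d"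
    and fin: "finite (darts V E)" and d: "d \<in> darts V E"
  shows "4 \<le> card (forward_orbit (face_perm \<sigma>) d)"
proof -
  let ?p = "face_perm \<sigma>"
  have bij: "bij_betw ?p (darts V E) (darts V E)"
    using bij_betw_face_perm[OF rs sym] .
  have side: "fst (?p x) \<in> S \<longleftrightarrow> fst x \<notin> S" if "x \<in> darts V E" for x
    using that fst_face_perm[OF rs sym that] bipartite unfolding darts_def by auto
  have no_2_cycle: "?p (?p x) \<noteq> x" if "x \<in> darts V E" for x
    using face_perm_no_2_cycle[OF rs sym that no_leaf[OF that]] .
  have in_darts: "(?p ^^ n) d \<in> darts V E" for n
    using bij_betw_apply[OF bij_betw_funpow[OF bij] d] .
  have "card {d, ?p d, ?p (?p d), ?p (?p (?p d))} = 4"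
  proof -
    have "?p d \<in> darts V E" "?p (?p d) \<in> darts V E"
      using in_darts[of 1] in_darts[of 2] by (simp_all add: numeral_2_eq_2)
    then have "fst d \<in> S \<longleftrightarrow> fst (?p d) \<notin> S" "fst (?p d) \<in> S \<longleftrightarrow> fst (?p (?p d)) \<notin> S"
      "fst (?p (?p d)) \<in> S \<longleftrightarrow> fst (?p (?p (?p d))) \<notin> S"
      using side d by blast+
    moreover have "?p (?p d) \<noteq> d" "?p (?p (?p d)) \<noteq> ?p d"
      using no_2_cycle d \<open>?p d \<in> darts V E\<close> by blast+
    ultimately have "d \<noteq> ?p d" "d \<noteq> ?p (?p d)" "d \<noteq> ?p (?p (?p d))"
      "?p d \<noteq> ?p (?p d)" "?p d \<noteq> ?p (?p (?p d))" "?p (?p d) \<noteq> ?p (?p (?p d))"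
      by metis+
    then show ?thesis
      by simp
  qed
  moreover have "{d, ?p d, ?p (?p d), ?p (?p (?p d))} \<subseteq> forward_orbit ?p d"
    using funpow_in_forward_orbit[where f = ?p and x = d and n = 0]
      funpow_in_forward_orbit[where f = ?p and x = d and n = 1]
      funpow_in_forward_orbit[where f = ?p and x = d and n = 2]
      funpow_in_forward_orbit[where f = ?p and x = d and n = 3]
    by (simp add: numeral_2_eq_2 numeral_3_eq_3)
  moreover have "finite (forward_orbit ?p d)"
    using forward_orbit_subset[OF bij d] fin finite_subset by blast
  ultimately show ?thesis
    by (metis card_mono)
qed

lemma card_faces_bipartite_le:
  assumes "rotation_system V E \<sigma>" "\<And>u w. E u w \<Longrightarrow> E w u"
    and "\<And>u w. E u w \<Longrightarrow> u \<in> S \<longleftrightarrow> w \<notin> S"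
    and "\<And>d. d \<in> darts V E \<Longrightarrow> \<exists>d'\<in>darts V E. d' \<noteq> d \<and> fst d' = fst d"
    and "finite (darts V E)"
  shows "4 * card (faces V E \<sigma>) \<le> card (darts V E)"
  unfolding faces_eq_forward_orbits
  using card_forward_orbits_le[OF assms(5) bij_betw_face_perm[OF assms(1,2)]]
    card_face_bipartite_ge_4[OF assms] by blast

section \<open>Genus of complete bipartite graphs\<close>

definition biclique :: "'v set \<Rightarrow> 'v set \<Rightarrow> 'v \<Rightarrow> 'v \<Rightarrow> bool" where
  "biclique A B u w \<longleftrightarrow> u \<in> A \<and> w \<in> B \<or> u \<in> B \<and> w \<in> A"

lemma darts_biclique: "A \<inter> B = {} \<Longrightarrow> darts (A \<union> B) (biclique A B) = A \<times> B \<union> B \<times> A"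
  unfolding darts_def biclique_def by auto

lemma biclique_darts_fst:
  assumes "u \<in> A" "A \<inter> B = {}"
  shows "{d \<in> A \<times> B \<union> B \<times> A. fst d = u} = {u} \<times> B"
  using assms by auto

lemma card_darts_biclique:
  assumes "finite A" "finite B" "A \<inter> B = {}"
  shows "card (darts (A \<union> B) (biclique A B)) = 2 * (card A * card B)"
proof -
  have "A \<times> B \<inter> B \<times> A = {}"
    using assms(3) by blast
  then show ?thesis
    unfolding darts_biclique[OF assms(3)] using assms(1,2)
    by (simp add: card_Un_disjoint card_cartesian_product)
qed

lemma biclique_no_leaf:
  assumes fin: "finite A" "finite B" and disj: "A \<inter> B = {}" and two: "2 \<le> card A" "2 \<le> card B"
    and d: "d \<in> darts (A \<union> B) (biclique A B)"
  shows "\<exists>d'\<in>darts (A \<union> B) (biclique A B). d' \<noteq> d \<and> fst d' = fst d"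
proof -
  obtain u w where uw: "d = (u, w)" "u \<in> A \<and> w \<in> B \<or> u \<in> B \<and> w \<in> A"
    using d unfolding darts_biclique[OF disj] by blast
  have "\<exists>w'\<in>A. w' \<noteq> w" "\<exists>w'\<in>B. w' \<noteq> w"
    using two fin by (metis card_le_Suc0_iff_eq not_less_eq_eq numeral_2_eq_2)+
  then show ?thesis
    unfolding darts_biclique[OF disj] using uw by auto
qed

lemma nonisolated_biclique:
  assumes "A \<noteq> {}" "B \<noteq> {}"
  shows "nonisolated (A \<union> B) (biclique A B) = A \<union> B"
  using assms unfolding nonisolated_def biclique_def by blast

lemma nontrivial_components_biclique:
  assumes "A \<noteq> {}" "B \<noteq> {}"
  shows "nontrivial_components (A \<union> B) (biclique A B) = {A \<union> B}"
proof -
  let ?R = "\<lambda>x y. x \<in> A \<union> B \<and> y \<in> A \<union> B \<and> biclique A B x y"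
  obtain a b where ab: "a \<in> A" "b \<in> B"
    using assms by blast
  have edge: "?R x y" "?R y x" if "x \<in> A" "y \<in> B" for x y
    using that unfolding biclique_def by blast+
  have two_steps: "?R\<^sup>*\<^sup>* x y" if "?R x z" "?R z y" for x y z
    using converse_rtranclp_into_rtranclp[of ?R, OF that(1) r_into_rtranclp[of ?R, OF that(2)]] .
  have connected: "?R\<^sup>*\<^sup>* x y" if xy: "x \<in> A \<union> B" "y \<in> A \<union> B" for x y
  proof -
    consider "x \<in> A" "y \<in> A" | "x \<in> A" "y \<in> B" | "x \<in> B" "y \<in> A" | "x \<in> B" "y \<in> B"
      using xy by blast
    then show ?thesis
    proof cases
      case 1
      show ?thesis by (rule two_steps[OF edge(1)[OF 1(1) ab(2)] edge(2)[OF 1(2) ab(2)]])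
    next
      case 2
      show ?thesis by (rule r_into_rtranclp[of ?R, OF edge(1)[OF 2]])
    next
      case 3
      show ?thesis by (rule r_into_rtranclp[of ?R, OF edge(2)[OF 3(2) 3(1)]])
    next
      case 4
      show ?thesis by (rule two_steps[OF edge(2)[OF ab(1) 4(1)] edge(1)[OF ab(1) 4(2)]])
    qed
  qed
  have reachable_in: "w \<in> A \<union> B" if "?R\<^sup>*\<^sup>* v w" "v \<in> A \<union> B" for v w
    using that by (induction rule: rtranclp_induct) simp_all
  have "{w. ?R\<^sup>*\<^sup>* v w} = A \<union> B" if "v \<in> A \<union> B" for v
    using connected[OF that] reachable_in[OF _ that] by blast
  then show ?thesis
    unfolding nontrivial_components_def nonisolated_biclique[OF assms] using ab by blast
qed

lemma funpow_apsnd: "(apsnd (c :: 'b \<Rightarrow> 'b) ^^ k) (u, w) = (u, (c ^^ k) w)"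
  by (induction k) simp_all

lemma funpow_face_perm_apsnd:
  "(face_perm (apsnd (c :: 'v \<Rightarrow> 'v)) ^^ (2 * k)) (u, w) = ((c ^^ k) u, (c ^^ k) w)"
  by (induction k) (simp_all add: face_perm_def)

lemma forward_orbit_apsnd:
  assumes "bij_betw c Y Y" "w \<in> Y" "\<And>y. y \<in> Y \<Longrightarrow> \<exists>k. (c ^^ k) w = y"
  shows "forward_orbit (apsnd c) (u, w) = {u} \<times> Y"
proof -
  have "(c ^^ n) w \<in> Y" for n
    using bij_betw_apply[OF bij_betw_funpow[OF assms(1)] assms(2)] .
  moreover have "(u, y) \<in> forward_orbit (apsnd c) (u, w)" if "y \<in> Y" for y
    using assms(3)[OF that] funpow_in_forward_orbit[where f = "apsnd c"] funpow_apsnd by metis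
  ultimately show ?thesis
    unfolding forward_orbit_def funpow_apsnd by blast
qed

lemma rotation_system_biclique_apsnd:
  assumes disj: "A \<inter> B = {}" and bijA: "bij_betw c A A" and bijB: "bij_betw c B B"
    and joint: "\<And>a a' b b'. a \<in> A \<Longrightarrow> a' \<in> A \<Longrightarrow> b \<in> B \<Longrightarrow> b' \<in> B \<Longrightarrow>
      \<exists>k. (c ^^ k) a = a' \<and> (c ^^ k) b = b'"
  shows "rotation_system (A \<union> B) (biclique A B) (apsnd c)"
  unfolding rotation_system_def
proof (intro conjI ballI)
  show "bij_betw (apsnd c) (darts (A \<union> B) (biclique A B)) (darts (A \<union> B) (biclique A B))"
  proof -
    have "bij_betw (apsnd c) (A \<times> B) (A \<times> B)" "bij_betw (apsnd c) (B \<times> A) (B \<times> A)"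
      unfolding apsnd_def using bij_betw_map_prod bij_betw_id bijA bijB by blast+
    moreover have "A \<times> B \<inter> B \<times> A = {}"
      using disj by blast
    ultimately show ?thesis
      unfolding darts_biclique[OF disj] by (rule bij_betw_combine)
  qed
next
  fix d assume "d \<in> darts (A \<union> B) (biclique A B)"
  then obtain u w where uw: "d = (u, w)" "u \<in> A \<and> w \<in> B \<or> u \<in> B \<and> w \<in> A"
    unfolding darts_biclique[OF disj] by blast
  have "forward_orbit (apsnd c) (u, w) = {d' \<in> A \<times> B \<union> B \<times> A. fst d' = u}"
    using uw(2)
  proof
    assume uw: "u \<in> A \<and> w \<in> B"
    then have "forward_orbit (apsnd c) (u, w) = {u} \<times> B"
      using joint[of u u w] by (intro forward_orbit_apsnd[OF bijB]) blast+
    then show ?thesis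
      using biclique_darts_fst[of u A B] uw disj by simp
  next
    assume uw: "u \<in> B \<and> w \<in> A"
    then have "forward_orbit (apsnd c) (u, w) = {u} \<times> A"
      using joint[of w _ u u] by (intro forward_orbit_apsnd[OF bijA]) blast+
    then show ?thesis
      using biclique_darts_fst[of u B A] uw disj by (simp add: Un_commute Int_commute)
  qed
  then show "{(apsnd c ^^ n) d |n. True} = {d' \<in> darts (A \<union> B) (biclique A B). fst d' = fst d}"
    unfolding forward_orbit_def darts_biclique[OF disj] uw(1) by simp
qed

lemma biclique_subset_face_orbit_apsnd:
  assumes bij: "bij_betw c X X" and u: "u \<in> X" and w: "w \<in> Y"
    and joint: "\<And>x x' y y'. x \<in> X \<Longrightarrow> x' \<in> X \<Longrightarrow> y \<in> Y \<Longrightarrow> y' \<in> Y \<Longrightarrow>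
      \<exists>k. (c ^^ k) x = x' \<and> (c ^^ k) y = y'"
  shows "X \<times> Y \<union> Y \<times> X \<subseteq> forward_orbit (face_perm (apsnd c)) (u, w)"
proof
  fix d assume "d \<in> X \<times> Y \<union> Y \<times> X"
  then consider x y where "x \<in> X" "y \<in> Y" "d = (x, y)" | x y where "x \<in> X" "y \<in> Y" "d = (y, x)"
    by blast
  then show "d \<in> forward_orbit (face_perm (apsnd c)) (u, w)"
  proof cases
    case (1 x y)
    then obtain k where "(c ^^ k) u = x" "(c ^^ k) w = y"
      using joint[OF u _ w] by blast
    then have "(face_perm (apsnd c) ^^ (2 * k)) (u, w) = d"
      using 1 by (simp only: funpow_face_perm_apsnd)
    then show ?thesis
      using funpow_in_forward_orbit[where f = "face_perm (apsnd c)" and n = "2 * k" and x = "(u, w)"]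
      by simp
  next
    case (2 x y)
    then have "x \<in> c ` X"
      using bij by (simp add: bij_betw_def)
    then obtain x0 where x0: "x0 \<in> X" "c x0 = x"
      by (elim imageE) simp
    then obtain k where "(c ^^ k) u = x0" "(c ^^ k) w = y"
      using joint[OF u x0(1) w] 2 by blast
    then have "(face_perm (apsnd c) ^^ (2 * k)) (u, w) = (x0, y)"
      by (simp only: funpow_face_perm_apsnd)
    then have "(face_perm (apsnd c) ^^ Suc (2 * k)) (u, w) = face_perm (apsnd c) (x0, y)"
      by simp
    also have "\<dots> = d"
      using x0 2 by (simp add: face_perm_def)
    finally have "(face_perm (apsnd c) ^^ Suc (2 * k)) (u, w) = d" .
    then show ?thesis
      using funpow_in_forward_orbit[where f = "face_perm (apsnd c)" and n = "Suc (2 * k)" and x = "(u, w)"]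
      by simp
  qed
qed

lemma faces_biclique_apsnd:
  assumes disj: "A \<inter> B = {}" and bijA: "bij_betw c A A" and bijB: "bij_betw c B B"
    and joint: "\<And>a a' b b'. a \<in> A \<Longrightarrow> a' \<in> A \<Longrightarrow> b \<in> B \<Longrightarrow> b' \<in> B \<Longrightarrow>
      \<exists>k. (c ^^ k) a = a' \<and> (c ^^ k) b = b'"
    and "A \<noteq> {}" "B \<noteq> {}"
  shows "faces (A \<union> B) (biclique A B) (apsnd c) = {darts (A \<union> B) (biclique A B)}"
proof -
  let ?D = "darts (A \<union> B) (biclique A B)"
  have rs: "rotation_system (A \<union> B) (biclique A B) (apsnd c)"
    using rotation_system_biclique_apsnd[OF disj bijA bijB joint] .
  have sym: "\<And>u w. biclique A B u w \<Longrightarrow> biclique A B w u"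
    unfolding biclique_def by blast
  have "?D \<subseteq> forward_orbit (face_perm (apsnd c)) d" if d: "d \<in> ?D" for d
  proof -
    have joint': "\<exists>k. (c ^^ k) b = b' \<and> (c ^^ k) a = a'"
      if "b \<in> B" "b' \<in> B" "a \<in> A" "a' \<in> A" for a a' b b'
      using joint[OF that(3,4,1,2)] by blast
    obtain u w where uw: "d = (u, w)" "u \<in> A \<and> w \<in> B \<or> u \<in> B \<and> w \<in> A"
      using d unfolding darts_biclique[OF disj] by blast
    from uw(2) have "A \<times> B \<union> B \<times> A \<subseteq> forward_orbit (face_perm (apsnd c)) (u, w)"
    proof
      assume "u \<in> A \<and> w \<in> B"
      then show ?thesis
        using biclique_subset_face_orbit_apsnd[OF bijA _ _ joint] by blast
    next
      assume "u \<in> B \<and> w \<in> A"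
      then have "B \<times> A \<union> A \<times> B \<subseteq> forward_orbit (face_perm (apsnd c)) (u, w)"
        using biclique_subset_face_orbit_apsnd[OF bijB _ _ joint'] by blast
      then show ?thesis
        by (simp only: Un_commute)
    qed
    then show ?thesis
      unfolding darts_biclique[OF disj] uw(1) .
  qed
  moreover have "forward_orbit (face_perm (apsnd c)) d \<subseteq> ?D" if "d \<in> ?D" for d
    using forward_orbit_subset[OF bij_betw_face_perm[OF rs sym] that] .
  moreover have "?D \<noteq> {}"
    using assms(5,6) unfolding darts_biclique[OF disj] by blast
  ultimately show ?thesis
    unfolding faces_eq_forward_orbits by blast
qed

text \<open>The genus is defined as a \<open>LEAST\<close> over rotation systems satisfying Euler's relation, so
  any lower bound first needs one such rotation system. Rotating both sides simultaneously
  through cycles of coprime lengths gives a single face.\<close>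

lemma biclique_euler_relation_one_face:
  assumes fin: "finite A" "finite B" and disj: "A \<inter> B = {}" and cop: "coprime (card A) (card B)"
    and ne: "A \<noteq> {}" "B \<noteq> {}"
  shows "\<exists>\<sigma>. rotation_system (A \<union> B) (biclique A B) \<sigma> \<and>
    2 * ((card A - 1) * (card B - 1) div 2) + card (nonisolated (A \<union> B) (biclique A B))
      + card (faces (A \<union> B) (biclique A B) \<sigma>)
    = 2 * card (nontrivial_components (A \<union> B) (biclique A B))
      + card (darts (A \<union> B) (biclique A B)) div 2"
proof -
  obtain c where c: "bij_betw c A A" "bij_betw c B B"
    "\<And>a a' b b'. a \<in> A \<Longrightarrow> a' \<in> A \<Longrightarrow> b \<in> B \<Longrightarrow> b' \<in> B \<Longrightarrow>
      \<exists>k. (c ^^ k) a = a' \<and> (c ^^ k) b = b'"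
    using coprime_joint_cyclic_shift[OF fin disj cop] by blast
  have "even ((card A - 1) * (card B - 1))"
    using cop by auto
  moreover have "(card A - 1) * (card B - 1) + card A + card B = card A * card B + 1"
    using ne fin by (cases "card A"; cases "card B") (simp_all add: algebra_simps)
  ultimately show ?thesis
    using rotation_system_biclique_apsnd[OF disj c] faces_biclique_apsnd[OF disj c ne]
      card_darts_biclique[OF fin disj] nonisolated_biclique[OF ne] nontrivial_components_biclique[OF ne]
      card_Un_disjoint[OF fin disj]
    by (intro exI[of _ "apsnd c"]) simp
qed

lemma biclique_genus_lower_bound:
  assumes fin: "finite A" "finite B" and disj: "A \<inter> B = {}" and cop: "coprime (card A) (card B)"
    and two: "2 \<le> card A" "2 \<le> card B"
  shows "(card A - 2) * (card B - 2) \<le> 4 * finite_graph_genus (A \<union> B) (biclique A B)"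
proof -
  let ?V = "A \<union> B" and ?E = "biclique A B" and ?g = "finite_graph_genus (A \<union> B) (biclique A B)"
  have ne: "A \<noteq> {}" "B \<noteq> {}"
    using two by auto
  let ?euler = "\<lambda>g. \<exists>\<sigma>. rotation_system ?V ?E \<sigma> \<and>
    2 * g + card (nonisolated ?V ?E) + card (faces ?V ?E \<sigma>)
      = 2 * card (nontrivial_components ?V ?E) + card (darts ?V ?E) div 2"
  have "?euler ((card A - 1) * (card B - 1) div 2)"
    using biclique_euler_relation_one_face[OF fin disj cop ne] .
  then have "?euler ?g"
    unfolding finite_graph_genus_def by (rule LeastI)
  then obtain \<sigma> where rs: "rotation_system ?V ?E \<sigma>"
    and euler: "2 * ?g + card (nonisolated ?V ?E) + card (faces ?V ?E \<sigma>)
      = 2 * card (nontrivial_components ?V ?E) + card (darts ?V ?E) div 2"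
    by blast
  have sym: "?E w u" if "?E u w" for u w
    using that unfolding biclique_def by blast
  have bipartite: "u \<in> A \<longleftrightarrow> w \<notin> A" if "?E u w" for u w
    using that disj unfolding biclique_def by blast
  have "finite (darts ?V ?E)"
    unfolding darts_biclique[OF disj] using fin by simp
  then have "4 * card (faces ?V ?E \<sigma>) \<le> card (darts ?V ?E)"
    using card_faces_bipartite_le[OF rs sym bipartite biclique_no_leaf[OF fin disj two]] by blast
  moreover have "(card A - 2) * (card B - 2) + 2 * card A + 2 * card B = card A * card B + 4"
  proof -
    obtain a b where "card A = a + 2" "card B = b + 2"
      using two by (metis le_add_diff_inverse2)
    then show ?thesis
      by (simp add: algebra_simps)
  qed
  ultimately show ?thesis
    using euler card_darts_biclique[OF fin disj] nonisolated_biclique[OF ne]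
      nontrivial_components_biclique[OF ne] card_Un_disjoint[OF fin disj]
    by simp
qed

definition contains_K3_infinity :: "'v set \<Rightarrow> ('v \<Rightarrow> 'v \<Rightarrow> bool) \<Rightarrow> bool" where
  "contains_K3_infinity V E \<longleftrightarrow> (\<exists>A B. card A = 3 \<and> infinite B \<and> A \<inter> B = {} \<and> A \<union> B \<subseteq> V \<and>
     (\<forall>a\<in>A. \<forall>b\<in>B. E a b \<and> E b a))"

lemma finite_graph_genus_le_graph_genus:
  "finite_subgraph W F V E \<Longrightarrow> enat (finite_graph_genus W F) \<le> graph_genus V E"
  unfolding graph_genus_def by (rule SUP_upper2[of "(W, F)"]) auto

lemma graph_genus_K3_infinity:
  assumes "contains_K3_infinity V E"
  shows "graph_genus V E = \<infinity>"
proof (rule ccontr)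
  obtain A B' where A: "card A = 3" and B': "infinite B'" "A \<inter> B' = {}" "A \<union> B' \<subseteq> V"
    and edges: "\<forall>a\<in>A. \<forall>b\<in>B'. E a b \<and> E b a"
    using assms unfolding contains_K3_infinity_def by blast
  assume "graph_genus V E \<noteq> \<infinity>"
  then obtain N where N: "graph_genus V E = enat N"
    by (cases "graph_genus V E") auto
  \<comment> \<open>\<open>card B \<equiv> 1 (mod 3)\<close> keeps it coprime to \<open>card A\<close>.\<close>
  obtain B where B: "finite B" "card B = 3 * (4 * N + 1) + 1" "B \<subseteq> B'"
    using infinite_arbitrarily_large[OF B'(1)] by blast
  have finA: "finite A"
    using A by (metis card.infinite zero_neq_numeral)
  have disj: "A \<inter> B = {}"
    using B'(2) B(3) by blast
  have "finite_subgraph (A \<union> B) (biclique A B) V E"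
    unfolding finite_subgraph_def biclique_def using finA B B' edges disj by blast
  then have "finite_graph_genus (A \<union> B) (biclique A B) \<le> N"
    using finite_graph_genus_le_graph_genus N by fastforce
  moreover have "coprime (card A) (card B)"
    unfolding A B(2) by (metis coprime_mult_left_iff coprime_add_one_right)
  then have "(card A - 2) * (card B - 2) \<le> 4 * finite_graph_genus (A \<union> B) (biclique A B)"
    using biclique_genus_lower_bound[OF finA B(1) disj] A B(2) by simp
  ultimately show False
    using A B(2) by simp
qed

lemma is_ideal_mult_left: "is_ideal I \<Longrightarrow> x \<in> I \<Longrightarrow> r * x \<in> I"
  unfolding is_ideal_def by blast

lemma is_ideal_mult_right: "is_ideal I \<Longrightarrow> x \<in> I \<Longrightarrow> x * r \<in> I"
  using is_ideal_mult_left by (metis mult.commute)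

lemma is_ideal_add: "is_ideal I \<Longrightarrow> x \<in> I \<Longrightarrow> y \<in> I \<Longrightarrow> x + y \<in> I"
  unfolding is_ideal_def by blast

lemma is_ideal_zero: "is_ideal I \<Longrightarrow> 0 \<in> I"
  unfolding is_ideal_def by blast

lemma is_ideal_diff: "is_ideal I \<Longrightarrow> x \<in> I \<Longrightarrow> y \<in> I \<Longrightarrow> x - y \<in> I"
  using is_ideal_add is_ideal_mult_left[of I y "- 1"] by (metis add_uminus_conv_diff mult_minus1)

lemma is_ideal_eq_UNIV: "is_ideal I \<Longrightarrow> 1 \<in> I \<Longrightarrow> I = UNIV"
  using is_ideal_mult_right[of I 1] by auto

lemma is_ideal_annihilator: "is_ideal (annihilator S)"
  unfolding is_ideal_def annihilator_def by (simp add: algebra_simps)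

lemma ideal_prod_eq_zero:
  assumes "\<forall>x\<in>I. \<forall>y\<in>J. x * y = 0"
  shows "ideal_prod I J = {0}"
proof -
  have "is_ideal {0::'a}"
    unfolding is_ideal_def by simp
  then have "ideal_prod I J \<subseteq> {0}"
    unfolding ideal_prod_def using assms by blast
  moreover have "0 \<in> ideal_prod I J"
    unfolding ideal_prod_def using is_ideal_zero by blast
  ultimately show ?thesis by blast
qed

definition principal_ideal :: "'a::comm_ring_1 \<Rightarrow> 'a set" where
  "principal_ideal x = {r * x | r. True}"

lemma is_ideal_principal_ideal: "is_ideal (principal_ideal x)"
  unfolding is_ideal_def principal_ideal_def
proof (intro conjI ballI allI)
  show "0 \<in> {r * x |r. True}"
    by (auto intro: exI[of _ 0])
next
  fix a b assume "a \<in> {r * x |r. True}" "b \<in> {r * x |r. True}"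
  then obtain r s where "a = r * x" "b = s * x" by blast
  then have "a + b = (r + s) * x" by (simp add: distrib_right)
  then show "a + b \<in> {r * x |r. True}" by blast
next
  fix c a assume "a \<in> {r * x |r. True}"
  then obtain r where "a = r * x" by blast
  then have "c * a = (c * r) * x" by (simp add: mult.assoc)
  then show "c * a \<in> {r * x |r. True}" by blast
qed

lemma principal_ideal_self: "x \<in> principal_ideal x"
  unfolding principal_ideal_def by (auto intro: exI[of _ 1])

lemma principal_ideal_subset: "is_ideal I \<Longrightarrow> x \<in> I \<Longrightarrow> principal_ideal x \<subseteq> I"
  unfolding principal_ideal_def using is_ideal_mult_left by blast

lemma principal_ideal_eq_zero_iff: "principal_ideal x = {0} \<longleftrightarrow> x = 0"
  using principal_ideal_self[of x] unfolding principal_ideal_def by auto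

lemma is_ideal_Union_chain:
  assumes "C \<noteq> {}" "\<forall>I\<in>C. is_ideal I" "\<forall>I\<in>C. \<forall>J\<in>C. I \<subseteq> J \<or> J \<subseteq> I"
  shows "is_ideal (\<Union>C)"
  unfolding is_ideal_def
proof (intro conjI ballI allI)
  show "0 \<in> \<Union>C"
    using assms(1,2) is_ideal_zero by blast
next
  fix x y assume "x \<in> \<Union>C" "y \<in> \<Union>C"
  then obtain I J where "I \<in> C" "J \<in> C" "x \<in> I" "y \<in> J" by blast
  then show "x + y \<in> \<Union>C"
    using assms(2,3) is_ideal_add by (metis UnionI subsetD)
next
  fix r x assume "x \<in> \<Union>C"
  then show "r * x \<in> \<Union>C"
    using assms(2) is_ideal_mult_left by blast
qed

lemma maximal_ideal_exists:
  fixes J :: "'a::comm_ring_1 set"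
  assumes "is_ideal J" "1 \<notin> J"
  obtains M where "maximal_ideal M" "J \<subseteq> M"
proof -
  let ?proper = "{I. is_ideal I \<and> J \<subseteq> I \<and> (1::'a) \<notin> I}"
  have "\<exists>U\<in>?proper. \<forall>I\<in>C. I \<subseteq> U" if "C \<in> chains ?proper" for C
  proof (cases "C = {}")
    case True
    then show ?thesis using assms by blast
  next
    case False
    then have "\<Union>C \<in> ?proper"
      using that is_ideal_Union_chain[OF False] unfolding chains_def chain_subset_def by blast
    then show ?thesis by blast
  qed
  then obtain M where M: "M \<in> ?proper" and max: "\<forall>I\<in>?proper. M \<subseteq> I \<longrightarrow> I = M"
    using Zorn_Lemma2[of ?proper] by blast
  have "maximal_ideal M"
    unfolding maximal_ideal_def
    using M max is_ideal_eq_UNIV by (metis (lifting) UNIV_I mem_Collect_eq subset_trans)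
  then show thesis
    using that M by blast
qed

lemma artinian_if_finite_ideals:
  assumes fin: "finite {I :: 'a::comm_ring_1 set. is_ideal I}"
  shows "artinian_ring TYPE('a)"
  unfolding artinian_ring_def
proof (intro allI impI)
  fix f :: "nat \<Rightarrow> 'a set"
  assume f: "\<forall>n. is_ideal (f n) \<and> f (Suc n) \<subseteq> f n"
  then have "finite (range f)"
    using finite_subset[OF _ fin] by blast
  then obtain N where minimal: "\<forall>I\<in>range f. I \<subseteq> f N \<longrightarrow> f N = I"
    using finite_has_minimal[of "range f"] by blast
  have "f n = f N" if "N \<le> n" for n
    using minimal lift_Suc_antimono_le[of f, OF _ that] f by blast
  then show "\<exists>N. \<forall>n\<ge>N. f n = f N"
    by blast
qed

lemma maximal_ideal_the_max_ideal:
  "local_ring TYPE('a::comm_ring_1) \<Longrightarrow> maximal_ideal (the_max_ideal :: 'a set)"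
  unfolding local_ring_def the_max_ideal_def by (rule theI')

lemma is_ideal_the_max_ideal:
  "local_ring TYPE('a::comm_ring_1) \<Longrightarrow> is_ideal (the_max_ideal :: 'a set)"
  using maximal_ideal_the_max_ideal unfolding maximal_ideal_def by blast

lemma one_notin_the_max_ideal:
  "local_ring TYPE('a::comm_ring_1) \<Longrightarrow> (1::'a) \<notin> the_max_ideal"
  using maximal_ideal_the_max_ideal is_ideal_eq_UNIV unfolding maximal_ideal_def by blast

lemma proper_ideal_subset_the_max_ideal:
  assumes "local_ring TYPE('a::comm_ring_1)" "is_ideal (J :: 'a set)" "1 \<notin> J"
  shows "J \<subseteq> the_max_ideal"
proof -
  obtain M where "maximal_ideal M" "J \<subseteq> M"
    using maximal_ideal_exists[OF assms(2,3)] .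
  then show ?thesis
    using assms(1) maximal_ideal_the_max_ideal[OF assms(1)] unfolding local_ring_def by blast
qed

lemma invertible_if_notin_the_max_ideal:
  assumes "local_ring TYPE('a::comm_ring_1)" "(x::'a) \<notin> the_max_ideal"
  obtains u where "u * x = 1"
proof -
  have "1 \<in> principal_ideal x"
    using proper_ideal_subset_the_max_ideal[OF assms(1) is_ideal_principal_ideal] principal_ideal_self assms(2)
    by blast
  then obtain u where "1 = u * x"
    unfolding principal_ideal_def by blast
  then show thesis
    using that by simp
qed

lemma infinite_nonzero_subideals:
  fixes x :: "'a::comm_ring_1"
  assumes loc: "local_ring TYPE('a)" and ann: "annihilator (the_max_ideal :: 'a set) = {0}"
    and "x \<noteq> 0"
  shows "infinite {J. is_ideal J \<and> J \<noteq> {0} \<and> J \<subseteq> principal_ideal x}"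
proof
  let ?F = "{J. is_ideal J \<and> J \<noteq> {0} \<and> J \<subseteq> principal_ideal x}"
  assume fin: "finite ?F"
  \<comment> \<open>A minimal member \<open>I\<close> would satisfy \<open>I = m I\<close>, which Nakayama's trick turns into \<open>I = 0\<close>.\<close>
  have "principal_ideal x \<in> ?F"
    using is_ideal_principal_ideal principal_ideal_eq_zero_iff \<open>x \<noteq> 0\<close> by blast
  then have "?F \<noteq> {}"
    by (metis empty_iff)
  from finite_has_minimal[OF fin this]
  obtain I where I: "I \<in> ?F" and minimal: "\<forall>J\<in>?F. J \<subseteq> I \<longrightarrow> I = J" ..
  then have "is_ideal I" by blast
  obtain z where z: "z \<in> I" "z \<noteq> 0"
    using I is_ideal_zero by blast
  then obtain y where y: "y \<in> the_max_ideal" "z * y \<noteq> 0"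
    using ann unfolding annihilator_def by blast
  have zy: "z * y \<in> I"
    using is_ideal_mult_right[OF \<open>is_ideal I\<close> z(1)] .
  then have "principal_ideal (z * y) \<in> ?F"
    using I principal_ideal_subset[OF \<open>is_ideal I\<close>] is_ideal_principal_ideal principal_ideal_eq_zero_iff y(2)
    by blast
  then have "I = principal_ideal (z * y)"
    using minimal principal_ideal_subset[OF \<open>is_ideal I\<close> zy] by simp
  then obtain r where r: "z = r * (z * y)"
    using z(1) unfolding principal_ideal_def by blast
  have "r * y \<in> the_max_ideal"
    using is_ideal_mult_left[OF is_ideal_the_max_ideal[OF loc] y(1)] .
  then have "1 - r * y \<notin> the_max_ideal"
    using is_ideal_add[OF is_ideal_the_max_ideal[OF loc], of "1 - r * y" "r * y"]
      one_notin_the_max_ideal[OF loc] by auto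
  then obtain u where u: "u * (1 - r * y) = 1"
    using invertible_if_notin_the_max_ideal[OF loc] by blast
  have "z = (u * (1 - r * y)) * z"
    using u by simp
  also have "\<dots> = u * (z - r * (z * y))"
    by (simp add: algebra_simps)
  finally show False
    using r z(2) by simp
qed

lemma annihilator_notin_principal_ideal_swap:
  fixes s t :: "'a::comm_ring_1"
  assumes loc: "local_ring TYPE('a)"
    and s: "s \<in> annihilator the_max_ideal" "s \<noteq> 0"
    and t: "t \<in> annihilator the_max_ideal" "t \<notin> principal_ideal s"
  shows "s \<notin> principal_ideal t"
proof
  assume "s \<in> principal_ideal t"
  then obtain r where r: "s = r * t"
    unfolding principal_ideal_def by blast
  show False
  proof (cases "r \<in> the_max_ideal")
    case True
    then have "s = 0"
      using r t(1) unfolding annihilator_def by (simp add: mult.commute)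
    then show False
      using s(2) by contradiction
  next
    case False
    then obtain u where "u * r = 1"
      using invertible_if_notin_the_max_ideal[OF loc] by blast
    then have "t = u * s"
      using r by (simp add: mult.assoc[symmetric])
    then show False
      using t(2) unfolding principal_ideal_def by blast
  qed
qed

lemma annihilator_mult_proper_ideal:
  assumes "local_ring TYPE('a::comm_ring_1)" "(x::'a) \<in> annihilator the_max_ideal"
    and "is_ideal J" "J \<noteq> UNIV" "y \<in> J"
  shows "x * y = 0"
proof -
  have "1 \<notin> J"
    using assms(3,4) is_ideal_eq_UNIV by blast
  then have "y \<in> the_max_ideal"
    using proper_ideal_subset_the_max_ideal[OF assms(1,3)] assms(5) by blast
  then show ?thesis
    using assms(2) unfolding annihilator_def by blast
qed

lemma three_principal_ideals_in_annihilator: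
  fixes s t :: "'a::comm_ring_1"
  assumes loc: "local_ring TYPE('a)"
    and s: "s \<in> annihilator the_max_ideal" "s \<noteq> 0"
    and t: "t \<in> annihilator the_max_ideal" "t \<notin> principal_ideal s"
  shows "card {principal_ideal s, principal_ideal t, principal_ideal (s + t)} = 3"
    and "\<And>I. I \<in> {principal_ideal s, principal_ideal t, principal_ideal (s + t)} \<Longrightarrow>
      is_ideal I \<and> I \<noteq> {0} \<and> I \<subseteq> annihilator the_max_ideal"
proof -
  have "s \<notin> principal_ideal t"
    using annihilator_notin_principal_ideal_swap[OF loc s t] .
  moreover have "s + t \<notin> principal_ideal s"
    using is_ideal_diff[OF is_ideal_principal_ideal, of "s + t" s s] principal_ideal_self t(2) by auto
  moreover have "s + t \<notin> principal_ideal t"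
    using is_ideal_diff[OF is_ideal_principal_ideal, of "s + t" t t] principal_ideal_self
      \<open>s \<notin> principal_ideal t\<close> by auto
  ultimately have "principal_ideal s \<noteq> principal_ideal t" "principal_ideal s \<noteq> principal_ideal (s + t)"
    "principal_ideal t \<noteq> principal_ideal (s + t)"
    using principal_ideal_self[of t] principal_ideal_self[of "s + t"] t(2) by blast+
  then show "card {principal_ideal s, principal_ideal t, principal_ideal (s + t)} = 3"
    by simp
  have "0 \<in> principal_ideal s"
    by (rule is_ideal_zero[OF is_ideal_principal_ideal])
  then have nonzero: "s \<noteq> 0" "t \<noteq> 0" "s + t \<noteq> 0"
    using s(2) t(2) \<open>s + t \<notin> principal_ideal s\<close> by auto
  have in_annihilator: "s \<in> annihilator the_max_ideal" "t \<in> annihilator the_max_ideal"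
    "s + t \<in> annihilator the_max_ideal"
    using s(1) t(1) is_ideal_add[OF is_ideal_annihilator s(1) t(1)] by blast+
  fix I assume "I \<in> {principal_ideal s, principal_ideal t, principal_ideal (s + t)}"
  then consider "I = principal_ideal s" | "I = principal_ideal t" | "I = principal_ideal (s + t)"
    by blast
  then show "is_ideal I \<and> I \<noteq> {0} \<and> I \<subseteq> annihilator the_max_ideal"
    by cases (simp_all add: nonzero in_annihilator is_ideal_principal_ideal principal_ideal_eq_zero_iff
      principal_ideal_subset[OF is_ideal_annihilator])
qed

lemma infinite_proper_ideals_diff:
  fixes F :: "'a::comm_ring_1 set set"
  assumes "infinite {I :: 'a set. is_ideal I}" "finite F"
  shows "infinite ({J. is_ideal J \<and> J \<noteq> {0} \<and> J \<noteq> UNIV} - F)"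
proof
  let ?B = "{J :: 'a set. is_ideal J \<and> J \<noteq> {0} \<and> J \<noteq> UNIV} - F"
  assume "finite ?B"
  then have "finite (?B \<union> F \<union> {{0}, UNIV})"
    using assms(2) by simp
  moreover have "{I. is_ideal I} \<subseteq> ?B \<union> F \<union> {{0}, UNIV}"
    by blast
  ultimately have "finite {I :: 'a set. is_ideal I}"
    by (rule finite_subset[rotated])
  then show False
    using assms(1) by contradiction
qed

section \<open>A complete bipartite subgraph of the annihilating-ideal graph\<close>

lemma AG_contains_K3_infinityI:
  fixes A B :: "'a::comm_ring_1 set set"
  assumes "card A = 3" "infinite B" "A \<inter> B = {}"
    and ideals: "\<And>I. I \<in> A \<union> B \<Longrightarrow> is_ideal I \<and> I \<noteq> {0}"
    and annihilate: "\<And>I J x y. I \<in> A \<Longrightarrow> J \<in> B \<Longrightarrow> x \<in> I \<Longrightarrow> y \<in> J \<Longrightarrow> x * y = 0"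
  shows "contains_K3_infinity (AG_vertices TYPE('a)) AG_edge"
proof -
  have prod: "ideal_prod I J = {0}" "ideal_prod J I = {0}" if "I \<in> A" "J \<in> B" for I J
    using annihilate[OF that] by (metis ideal_prod_eq_zero mult.commute)+
  obtain I0 J0 where "I0 \<in> A" "J0 \<in> B"
    using assms(1,2) by (metis card.empty ex_in_conv finite.emptyI zero_neq_numeral)
  then have "A \<union> B \<subseteq> AG_vertices TYPE('a)"
    unfolding AG_vertices_def annihilating_ideal_def using ideals prod by blast
  moreover have "AG_edge I J \<and> AG_edge J I" if "I \<in> A" "J \<in> B" for I J
    unfolding AG_edge_def using prod[OF that] that assms(3) by blast
  ultimately show ?thesis
    unfolding contains_K3_infinity_def using assms(1-3) by blast
qed

lemma AG_contains_K3_infinity_if_annihilator_zero: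
  fixes a b :: "'a::comm_ring_1"
  assumes loc: "local_ring TYPE('a)" and ann: "annihilator (the_max_ideal :: 'a set) = {0}"
    and ab: "a \<noteq> 0" "b \<noteq> 0" "a * b = 0"
  shows "contains_K3_infinity (AG_vertices TYPE('a)) AG_edge"
proof -
  let ?sub = "\<lambda>x. {J. is_ideal J \<and> J \<noteq> {0} \<and> J \<subseteq> principal_ideal x}"
  obtain A where A: "finite A" "card A = 3" "A \<subseteq> ?sub a"
    using infinite_arbitrarily_large[OF infinite_nonzero_subideals[OF loc ann ab(1)]] by blast
  have "infinite (?sub b - A)"
    using infinite_nonzero_subideals[OF loc ann ab(2)] A(1) by simp
  moreover have "A \<inter> (?sub b - A) = {}"
    by blast
  moreover have "is_ideal I \<and> I \<noteq> {0}" if "I \<in> A \<union> (?sub b - A)" for I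
    using that A(3) by blast
  moreover have "x * y = 0" if IJ: "I \<in> A" "J \<in> ?sub b - A" "x \<in> I" "y \<in> J" for I J x y
  proof -
    obtain r r' where "x = r * a" "y = r' * b"
      using IJ A(3) unfolding principal_ideal_def by blast
    then have "x * y = (r * r') * (a * b)"
      by (simp add: ac_simps)
    then show ?thesis
      using ab(3) by simp
  qed
  ultimately show ?thesis
    by (rule AG_contains_K3_infinityI[OF A(2)])
qed

lemma AG_contains_K3_infinity_if_not_gorenstein:
  assumes noeth: "noetherian_ring TYPE('a::comm_ring_1)" and loc: "local_ring TYPE('a)"
    and not_gorenstein: "\<not> gorenstein TYPE('a)" and inf: "infinite {I :: 'a set. is_ideal I}"
    and ann: "annihilator (the_max_ideal :: 'a set) \<noteq> {0}"
  shows "contains_K3_infinity (AG_vertices TYPE('a)) AG_edge"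
proof -
  obtain s :: 'a where s: "s \<in> annihilator the_max_ideal" "s \<noteq> 0"
    using ann is_ideal_zero[OF is_ideal_annihilator] by blast
  have "annihilator the_max_ideal \<noteq> principal_ideal s"
  proof
    assume "annihilator the_max_ideal = principal_ideal s"
    then have "gorenstein TYPE('a)"
      using noeth loc s(2) unfolding gorenstein_def principal_ideal_def by blast
    then show False
      using not_gorenstein by contradiction
  qed
  then obtain t where t: "t \<in> annihilator the_max_ideal" "t \<notin> principal_ideal s"
    using principal_ideal_subset[OF is_ideal_annihilator s(1)] by blast
  let ?A = "{principal_ideal s, principal_ideal t, principal_ideal (s + t)}"
  let ?B = "{J. is_ideal J \<and> J \<noteq> {0} \<and> J \<noteq> UNIV} - ?A"
  note A = three_principal_ideals_in_annihilator[OF loc s t]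
  have "infinite ?B"
    by (rule infinite_proper_ideals_diff[OF inf]) simp
  moreover have "is_ideal I \<and> I \<noteq> {0}" if "I \<in> ?A \<union> ?B" for I
    using that A(2) by blast
  moreover have "x * y = 0" if "I \<in> ?A" "J \<in> ?B" "x \<in> I" "y \<in> J" for I J x y
    using annihilator_mult_proper_ideal[OF loc] A(2)[OF that(1)] that(2-4) by blast
  ultimately show ?thesis
    by (rule AG_contains_K3_infinityI[OF A(1) _ Diff_disjoint])
qed

theorem corollary3p6:
  assumes "(1::'a::comm_ring_1) \<noteq> 0"
    and "noetherian_ring TYPE('a)"
    and "local_ring TYPE('a)"
    and "\<not> integral_domain TYPE('a)"
    and "graph_genus (AG_vertices TYPE('a)) AG_edge < \<infinity>"
  shows "gorenstein TYPE('a) \<or> (artinian_ring TYPE('a) \<and> finite {I :: 'a set. is_ideal I})"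
proof (rule ccontr)
  assume "\<not> ?thesis"
  then have not_gorenstein: "\<not> gorenstein TYPE('a)"
    and infinite_ideals: "infinite {I :: 'a set. is_ideal I}"
    using artinian_if_finite_ideals by blast+
  have "contains_K3_infinity (AG_vertices TYPE('a)) AG_edge"
  proof (cases "annihilator (the_max_ideal :: 'a set) = {0}")
    case True
    obtain a b :: 'a where "a \<noteq> 0" "b \<noteq> 0" "a * b = 0"
      using assms(1,4) unfolding integral_domain_def by blast
    then show ?thesis
      by (rule AG_contains_K3_infinity_if_annihilator_zero[OF assms(3) True])
  next
    case False
    then show ?thesis
      by (rule AG_contains_K3_infinity_if_not_gorenstein[OF assms(2,3) not_gorenstein infinite_ideals])
  qed
  then show False
    using graph_genus_K3_infinity assms(5) by fastforce
qed

end
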